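(* Let $f,g\in\mathcal H_{(d)}$ be nonzero and $x,y\in\mathbb C^{n+1}$ nonzero, with $\operatorname{rank}Df(x)|_{x^\perp}=n$ and $v<1$. Let $u_g=\frac{D^{3/2}}{2}\mu(g,x)d_R(x,y)$. Then \[(1-v)u_g\le u\le(1+v)u_g\quad\text{and}\quad(1-v)\delta(g,x)-v\le\delta(f,x)\le(1+v)\delta(g,x)+v.\]
   Context: $(d)=(d_1,\dots,d_n)$, $D=\max_i d_i\ge2$. $\mathcal H_{(d)}$: systems of $n$ homogeneous complex polynomials in $n+1$ variables of degrees $d_i$ with the Bombieri–Weyl inner product $\langle f,g\rangle=\sum_i\sum_{|\alpha|=d_i}\frac{\alpha_0!\cdots\alpha_n!}{d_i!}f_{i,\alpha}\overline{g_{i,\alpha}}$ and its norm. $x^\perp$ is the Hermitian orthogonal complement of $x$. $\mu(f,x)=\|f\|\,\|(Df(x)|_{x^\perp})^{-1}\mathrm{diag}(\sqrt{d_i}\|x\|^{d_i-1})\|$ (operator norm). $\delta(f,x)=\|x\|^{-1}\|(Df(x)|_{x^\perp})^{-1}\mathrm{diag}(d_i)f(x)\|$. $d_R(x,y)\in[0,\pi/2]$ with $\cos d_R=|\langle x,y\rangle|/(\|x\|\|y\|)$. $u=\frac{D^{3/2}}{2}\mu(f,x)d_R(x,y)$, $v=D^{1/2}\mu(f,x)\,\big\|\frac{f}{\|f\|}-\frac{g}{\|g\|}\big\|$. *)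

theory Defs
  imports Complex_Main
begin

text \<open>Vectors of C^N are functions nat \<Rightarrow> complex, only the entries
  with index < N are relevant. C^(n+1) uses indices 0..n (variables x_0..x_n),
  C^n uses indices 0..n-1 (equations). A multi-index is alpha :: nat \<Rightarrow> nat
  supported on {0..n}. A system f in H_(d) is given by its coefficients
  f i alpha (i < n), which vanish outside the monomials of degree d i.\<close>

definition mons :: "nat \<Rightarrow> nat \<Rightarrow> (nat \<Rightarrow> nat) set" where
  "mons n k = {\<alpha>. (\<forall>j>n. \<alpha> j = 0) \<and> (\<Sum>j\<le>n. \<alpha> j) = k}"

definition in_Hd :: "nat \<Rightarrow> (nat \<Rightarrow> nat) \<Rightarrow> (nat \<Rightarrow> (nat \<Rightarrow> nat) \<Rightarrow> complex) \<Rightarrow> bool" where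
  "in_Hd n d f \<longleftrightarrow> (\<forall>i \<alpha>. (i \<ge> n \<or> \<alpha> \<notin> mons n (d i)) \<longrightarrow> f i \<alpha> = 0)"

definition bw_inner :: "nat \<Rightarrow> (nat \<Rightarrow> nat) \<Rightarrow> (nat \<Rightarrow> (nat \<Rightarrow> nat) \<Rightarrow> complex)
    \<Rightarrow> (nat \<Rightarrow> (nat \<Rightarrow> nat) \<Rightarrow> complex) \<Rightarrow> complex" where
  "bw_inner n d f g = (\<Sum>i<n. \<Sum>\<alpha>\<in>mons n (d i).
      of_real ((\<Prod>j\<le>n. fact (\<alpha> j)) / fact (d i)) * f i \<alpha> * cnj (g i \<alpha>))"

definition bw_norm :: "nat \<Rightarrow> (nat \<Rightarrow> nat) \<Rightarrow> (nat \<Rightarrow> (nat \<Rightarrow> nat) \<Rightarrow> complex) \<Rightarrow> real" where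
  "bw_norm n d f = sqrt (Re (bw_inner n d f f))"

definition sys_scale :: "complex \<Rightarrow> (nat \<Rightarrow> (nat \<Rightarrow> nat) \<Rightarrow> complex) \<Rightarrow> (nat \<Rightarrow> (nat \<Rightarrow> nat) \<Rightarrow> complex)" where
  "sys_scale c f = (\<lambda>i \<alpha>. c * f i \<alpha>)"

definition sys_diff :: "(nat \<Rightarrow> (nat \<Rightarrow> nat) \<Rightarrow> complex) \<Rightarrow> (nat \<Rightarrow> (nat \<Rightarrow> nat) \<Rightarrow> complex) \<Rightarrow> (nat \<Rightarrow> (nat \<Rightarrow> nat) \<Rightarrow> complex)" where
  "sys_diff f g = (\<lambda>i \<alpha>. f i \<alpha> - g i \<alpha>)"

definition peval :: "nat \<Rightarrow> (nat \<Rightarrow> nat) \<Rightarrow> (nat \<Rightarrow> (nat \<Rightarrow> nat) \<Rightarrow> complex) \<Rightarrow> nat \<Rightarrow> (nat \<Rightarrow> complex) \<Rightarrow> complex" where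
  "peval n d f i x = (\<Sum>\<alpha>\<in>mons n (d i). f i \<alpha> * (\<Prod>j\<le>n. x j ^ \<alpha> j))"

definition ppartial :: "nat \<Rightarrow> (nat \<Rightarrow> nat) \<Rightarrow> (nat \<Rightarrow> (nat \<Rightarrow> nat) \<Rightarrow> complex) \<Rightarrow> nat \<Rightarrow> nat \<Rightarrow> (nat \<Rightarrow> complex) \<Rightarrow> complex" where
  "ppartial n d f i j x = (\<Sum>\<alpha>\<in>mons n (d i).
      f i \<alpha> * of_nat (\<alpha> j) * x j ^ (\<alpha> j - 1) * (\<Prod>k\<in>{..n} - {j}. x k ^ \<alpha> k))"

definition Dfapp :: "nat \<Rightarrow> (nat \<Rightarrow> nat) \<Rightarrow> (nat \<Rightarrow> (nat \<Rightarrow> nat) \<Rightarrow> complex) \<Rightarrow> (nat \<Rightarrow> complex) \<Rightarrow> (nat \<Rightarrow> complex) \<Rightarrow> (nat \<Rightarrow> complex)" where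
  "Dfapp n d f x z = (\<lambda>i. if i < n then (\<Sum>j\<le>n. ppartial n d f i j x * z j) else 0)"

definition cspace :: "nat \<Rightarrow> (nat \<Rightarrow> complex) set" where
  "cspace N = {z. \<forall>j\<ge>N. z j = 0}"

definition hinner :: "nat \<Rightarrow> (nat \<Rightarrow> complex) \<Rightarrow> (nat \<Rightarrow> complex) \<Rightarrow> complex" where
  "hinner N x y = (\<Sum>j<N. x j * cnj (y j))"

definition vnorm :: "nat \<Rightarrow> (nat \<Rightarrow> complex) \<Rightarrow> real" where
  "vnorm N x = sqrt (\<Sum>j<N. (cmod (x j))\<^sup>2)"

definition perp :: "nat \<Rightarrow> (nat \<Rightarrow> complex) \<Rightarrow> (nat \<Rightarrow> complex) set" where
  "perp n x = {z \<in> cspace (Suc n). hinner (Suc n) z x = 0}"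

text \<open>rank (Df(x) restricted to x^perp) = n, i.e. the restriction (a linear map
  into C^n) has image all of C^n.\<close>
definition rank_full :: "nat \<Rightarrow> (nat \<Rightarrow> nat) \<Rightarrow> (nat \<Rightarrow> (nat \<Rightarrow> nat) \<Rightarrow> complex) \<Rightarrow> (nat \<Rightarrow> complex) \<Rightarrow> bool" where
  "rank_full n d f x \<longleftrightarrow> Dfapp n d f x ` perp n x = cspace n"

definition rinv :: "nat \<Rightarrow> (nat \<Rightarrow> nat) \<Rightarrow> (nat \<Rightarrow> (nat \<Rightarrow> nat) \<Rightarrow> complex) \<Rightarrow> (nat \<Rightarrow> complex) \<Rightarrow> (nat \<Rightarrow> complex) \<Rightarrow> (nat \<Rightarrow> complex)" where
  "rinv n d f x w = (THE z. z \<in> perp n x \<and> Dfapp n d f x z = w)"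

definition opnorm :: "nat \<Rightarrow> ((nat \<Rightarrow> complex) \<Rightarrow> (nat \<Rightarrow> complex)) \<Rightarrow> real" where
  "opnorm n L = Sup {vnorm (Suc n) (L w) | w. w \<in> cspace n \<and> vnorm n w \<le> 1}"

definition mu :: "nat \<Rightarrow> (nat \<Rightarrow> nat) \<Rightarrow> (nat \<Rightarrow> (nat \<Rightarrow> nat) \<Rightarrow> complex) \<Rightarrow> (nat \<Rightarrow> complex) \<Rightarrow> real" where
  "mu n d f x = bw_norm n d f * opnorm n (\<lambda>w. rinv n d f x
      (\<lambda>i. if i < n then of_real (sqrt (real (d i)) * vnorm (Suc n) x ^ (d i - 1)) * w i else 0))"

definition delta :: "nat \<Rightarrow> (nat \<Rightarrow> nat) \<Rightarrow> (nat \<Rightarrow> (nat \<Rightarrow> nat) \<Rightarrow> complex) \<Rightarrow> (nat \<Rightarrow> complex) \<Rightarrow> real" where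
  "delta n d f x = vnorm (Suc n) (rinv n d f x
      (\<lambda>i. if i < n then of_nat (d i) * peval n d f i x else 0)) / vnorm (Suc n) x"

definition dR :: "nat \<Rightarrow> (nat \<Rightarrow> complex) \<Rightarrow> (nat \<Rightarrow> complex) \<Rightarrow> real" where
  "dR n x y = arccos (cmod (hinner (Suc n) x y) / (vnorm (Suc n) x * vnorm (Suc n) y))"

definition Dmax :: "nat \<Rightarrow> (nat \<Rightarrow> nat) \<Rightarrow> nat" where
  "Dmax n d = Max (d ` {..<n})"

end

theory Submission
  imports Defs "HOL-Analysis.L2_Norm" "Jordan_Normal_Form.Determinant"
begin

text \<open>
  Write A_h z = Delta^{-1} Dh(x) z for the derivative
  normalized by Delta = diag(sqrt(d_i) ||x||^(d_i - 1)), and h' = h/||h||.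

  The argument has three ingredients.
  (1) Bombieri--Weyl bounds: |h_i(x)| \<le> ||h_i|| ||x||^(d_i) and
      |Dh_i(x) z| \<le> d_i ||h_i|| ||x||^(d_i - 1) ||z||, from a weighted Cauchy--Schwarz
      inequality and the multinomial theorem. Hence ||A_h z|| \<le> sqrt(D) ||h|| ||z||, and
      ||A_f' z|| and ||A_g' z|| differ by at most eps ||z||, eps = sqrt(D) ||f' - g'||.
  (2) mu(h,x) is the optimal constant in ||z|| \<le> mu(h,x) ||A_h' z|| for z \<perp> x.
      Here finite-dimensional linear algebra (square matrices are injective iff
      surjective) turns full rank into unique solvability of Df(x) z = w on x^perp.
  (3) Combining (1) and (2) with v = mu(f,x) eps < 1 gives injectivity of Dg(x) on x^perp,
      (1 - v) mu(g,x) \<le> mu(f,x) \<le> (1 + v) mu(g,x), and, comparing the two Newton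
      steps through the lower bound for f, the bounds for delta.
  The bounds for u follow by multiplying those for mu by D^(3/2) d_R(x,y)/2 \<ge> 0.
\<close>

section \<open>Euclidean norm and Cauchy--Schwarz inequalities on C^N\<close>

lemma vnorm_eq_L2_set: "vnorm N z = L2_set (\<lambda>j. cmod (z j)) {..<N}"
  unfolding vnorm_def L2_set_def ..

lemma vnorm_nonneg: "0 \<le> vnorm N z"
  by (simp add: vnorm_eq_L2_set)

lemma vnorm_sq: "(vnorm N z)\<^sup>2 = (\<Sum>j<N. (cmod (z j))\<^sup>2)"
  unfolding vnorm_def by (simp add: sum_nonneg)

lemma vnorm_component: "i < N \<Longrightarrow> cmod (z i) \<le> vnorm N z"
  unfolding vnorm_eq_L2_set by (rule member_le_L2_set) auto

lemma vnorm_zero_vec: "vnorm N (\<lambda>j. 0) = 0"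
  by (simp add: vnorm_def)

lemma vnorm_eq_0:
  assumes "z \<in> cspace N" and "vnorm N z = 0"
  shows "z = (\<lambda>j. 0)"
proof
  fix j
  show "z j = 0"
    using vnorm_component[of j N z] assms by (cases "j < N") (auto simp: cspace_def)
qed

lemma vnorm_pos: "z \<in> cspace N \<Longrightarrow> z \<noteq> (\<lambda>j. 0) \<Longrightarrow> 0 < vnorm N z"
  using vnorm_nonneg[of N z] vnorm_eq_0[of z N] by fastforce

lemma vnorm_scale: "vnorm N (\<lambda>j. c * a j) = cmod c * vnorm N a"
  unfolding vnorm_eq_L2_set by (simp add: L2_set_right_distrib norm_mult)

lemma vnorm_add: "vnorm N (\<lambda>j. a j + b j) \<le> vnorm N a + vnorm N b"
proof -
  have "vnorm N (\<lambda>j. a j + b j) \<le> L2_set (\<lambda>j. cmod (a j) + cmod (b j)) {..<N}"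
    unfolding vnorm_eq_L2_set by (intro L2_set_mono norm_triangle_ineq) auto
  also have "\<dots> \<le> vnorm N a + vnorm N b"
    unfolding vnorm_eq_L2_set by (rule L2_set_triangle_ineq)
  finally show ?thesis .
qed

lemma vnorm_diff: "vnorm N (\<lambda>j. a j - b j) \<le> vnorm N a + vnorm N b"
  using vnorm_add[of N a "\<lambda>j. (-1) * b j"] vnorm_scale[of N "-1" b] by simp

lemma vnorm_diff_abs: "\<bar>vnorm N a - vnorm N b\<bar> \<le> vnorm N (\<lambda>j. a j - b j)"
proof -
  have "vnorm N a \<le> vnorm N b + vnorm N (\<lambda>j. a j - b j)"
    using vnorm_add[of N b "\<lambda>j. a j - b j"] by simp
  moreover have "vnorm N b \<le> vnorm N a + vnorm N (\<lambda>j. a j - b j)"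
    using vnorm_diff[of N a "\<lambda>j. a j - b j"] by simp
  ultimately show ?thesis by linarith
qed

lemma vnorm_sum: "finite I \<Longrightarrow> vnorm N (\<lambda>j. \<Sum>i\<in>I. f i j) \<le> (\<Sum>i\<in>I. vnorm N (f i))"
proof (induction rule: finite_induct)
  case empty
  then show ?case by (simp add: vnorm_zero_vec)
next
  case (insert a F)
  then have "vnorm N (\<lambda>j. \<Sum>i\<in>insert a F. f i j) = vnorm N (\<lambda>j. f a j + (\<Sum>i\<in>F. f i j))"
    by simp
  also have "\<dots> \<le> vnorm N (f a) + vnorm N (\<lambda>j. \<Sum>i\<in>F. f i j)" by (rule vnorm_add)
  finally show ?case using insert by simp
qed

lemma hinner_self: "hinner N x x = of_real ((vnorm N x)\<^sup>2)"
  unfolding hinner_def vnorm_sq by (simp only: of_real_sum complex_norm_square)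

lemma hinner_cauchy_schwarz: "cmod (hinner N x y) \<le> vnorm N x * vnorm N y"
proof -
  have "cmod (hinner N x y) \<le> (\<Sum>j<N. \<bar>cmod (x j)\<bar> * \<bar>cmod (y j)\<bar>)"
    unfolding hinner_def by (rule order_trans[OF norm_sum]) (simp add: norm_mult)
  also have "\<dots> \<le> vnorm N x * vnorm N y"
    unfolding vnorm_eq_L2_set by (rule L2_set_mult_ineq)
  finally show ?thesis .
qed

lemma weighted_cauchy_schwarz:
  fixes h c :: "'a \<Rightarrow> complex"
  assumes w: "\<And>\<alpha>. \<alpha> \<in> M \<Longrightarrow> 0 < w \<alpha>"
  shows "cmod (\<Sum>\<alpha>\<in>M. h \<alpha> * c \<alpha>)
     \<le> sqrt (\<Sum>\<alpha>\<in>M. w \<alpha> * (cmod (h \<alpha>))\<^sup>2) * sqrt (\<Sum>\<alpha>\<in>M. (cmod (c \<alpha>))\<^sup>2 / w \<alpha>)"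
proof -
  have "cmod (\<Sum>\<alpha>\<in>M. h \<alpha> * c \<alpha>)
      \<le> (\<Sum>\<alpha>\<in>M. \<bar>sqrt (w \<alpha>) * cmod (h \<alpha>)\<bar> * \<bar>cmod (c \<alpha>) / sqrt (w \<alpha>)\<bar>)"
  proof (intro order_trans[OF norm_sum] sum_mono)
    fix \<alpha> assume "\<alpha> \<in> M"
    then have "0 < w \<alpha>" by (rule w)
    then show "cmod (h \<alpha> * c \<alpha>) \<le> \<bar>sqrt (w \<alpha>) * cmod (h \<alpha>)\<bar> * \<bar>cmod (c \<alpha>) / sqrt (w \<alpha>)\<bar>"
      by (simp add: norm_mult abs_mult)
  qed
  also have "\<dots> \<le> L2_set (\<lambda>\<alpha>. sqrt (w \<alpha>) * cmod (h \<alpha>)) M * L2_set (\<lambda>\<alpha>. cmod (c \<alpha>) / sqrt (w \<alpha>)) M"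
    by (rule L2_set_mult_ineq)
  also have "\<dots> = sqrt (\<Sum>\<alpha>\<in>M. w \<alpha> * (cmod (h \<alpha>))\<^sup>2) * sqrt (\<Sum>\<alpha>\<in>M. (cmod (c \<alpha>))\<^sup>2 / w \<alpha>)"
    unfolding L2_set_def using w
    by (intro arg_cong2[where f = "\<lambda>a b. sqrt a * sqrt b"] sum.cong)
      (auto simp: power_mult_distrib power_divide less_imp_le)
  finally show ?thesis .
qed

lemma square_weighted_sum_le:
  fixes a q :: "'a \<Rightarrow> real"
  assumes a: "\<And>j. j \<in> A \<Longrightarrow> 0 \<le> a j"
  shows "(\<Sum>j\<in>A. a j * q j)\<^sup>2 \<le> (\<Sum>j\<in>A. a j) * (\<Sum>j\<in>A. a j * (q j)\<^sup>2)"
proof -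
  have "\<bar>\<Sum>j\<in>A. a j * q j\<bar> \<le> (\<Sum>j\<in>A. \<bar>sqrt (a j)\<bar> * \<bar>sqrt (a j) * q j\<bar>)"
  proof (intro order_trans[OF sum_abs] sum_mono)
    fix j assume "j \<in> A"
    then have "sqrt (a j) * sqrt (a j) = a j" using a by simp
    then show "\<bar>a j * q j\<bar> \<le> \<bar>sqrt (a j)\<bar> * \<bar>sqrt (a j) * q j\<bar>"
      by (metis abs_mult mult.assoc order_refl)
  qed
  also have "\<dots> \<le> L2_set (\<lambda>j. sqrt (a j)) A * L2_set (\<lambda>j. sqrt (a j) * q j) A"
    by (rule L2_set_mult_ineq)
  finally have "(\<Sum>j\<in>A. a j * q j)\<^sup>2 \<le> (L2_set (\<lambda>j. sqrt (a j)) A * L2_set (\<lambda>j. sqrt (a j) * q j) A)\<^sup>2"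
    by (simp add: abs_le_square_iff[symmetric])
  also have "\<dots> = (\<Sum>j\<in>A. a j) * (\<Sum>j\<in>A. a j * (q j)\<^sup>2)"
    unfolding L2_set_def power_mult_distrib using a
    by (simp add: sum_nonneg power_mult_distrib cong: sum.cong)
  finally show ?thesis .
qed

section \<open>Monomials, Bombieri--Weyl weights and the multinomial theorem\<close>

definition monomial :: "nat \<Rightarrow> (nat \<Rightarrow> nat) \<Rightarrow> (nat \<Rightarrow> 'a::comm_semiring_1) \<Rightarrow> 'a" where
  "monomial n \<alpha> x = (\<Prod>j\<le>n. x j ^ \<alpha> j)"

definition bw_weight :: "nat \<Rightarrow> nat \<Rightarrow> (nat \<Rightarrow> nat) \<Rightarrow> real" where
  "bw_weight n k \<alpha> = (\<Prod>j\<le>n. fact (\<alpha> j)) / fact k"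

lemma bw_weight_pos: "0 < bw_weight n k \<alpha>"
  unfolding bw_weight_def by (intro divide_pos_pos prod_pos) auto

lemma finite_mons: "finite (mons n k)"
proof -
  have "mons n k \<subseteq> {\<alpha>. \<forall>j. (j \<in> {..n} \<longrightarrow> \<alpha> j \<in> {..k}) \<and> (j \<notin> {..n} \<longrightarrow> \<alpha> j = 0)}"
  proof
    fix \<alpha> assume "\<alpha> \<in> mons n k"
    then have "(\<Sum>j\<le>n. \<alpha> j) = k" and "\<forall>j>n. \<alpha> j = 0" by (auto simp: mons_def)
    moreover have "\<alpha> j \<le> (\<Sum>j\<le>n. \<alpha> j)" if "j \<le> n" for j
      using that by (intro member_le_sum) auto
    ultimately show "\<alpha> \<in> {\<alpha>. \<forall>j. (j \<in> {..n} \<longrightarrow> \<alpha> j \<in> {..k}) \<and> (j \<notin> {..n} \<longrightarrow> \<alpha> j = 0)}"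
      by auto
  qed
  moreover have "finite {\<alpha>. \<forall>j. (j \<in> {..n} \<longrightarrow> \<alpha> j \<in> {..k}) \<and> (j \<notin> {..n} \<longrightarrow> \<alpha> j = (0::nat))}"
    by (rule finite_set_of_finite_funs) auto
  ultimately show ?thesis by (rule finite_subset)
qed

lemma mons_0: "mons n 0 = {\<lambda>_. 0}"
proof
  show "mons n 0 \<subseteq> {\<lambda>_. 0}"
  proof
    fix \<alpha> assume "\<alpha> \<in> mons n 0"
    then have "\<forall>j\<le>n. \<alpha> j = 0" and "\<forall>j>n. \<alpha> j = 0" by (auto simp: mons_def)
    then have "\<alpha> = (\<lambda>_. 0)" by (intro ext) (metis not_le)
    then show "\<alpha> \<in> {\<lambda>_. 0}" by simp
  qed
qed (simp add: mons_def)

lemma monomial_upd: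
  assumes "j \<le> n"
  shows "monomial n (\<alpha>(j := a)) x = x j ^ a * (\<Prod>l\<in>{..n}-{j}. x l ^ \<alpha> l)"
proof -
  have "(\<Prod>l\<in>{..n}-{j}. x l ^ (\<alpha>(j := a)) l) = (\<Prod>l\<in>{..n}-{j}. x l ^ \<alpha> l)"
    by (rule prod.cong) auto
  then show ?thesis
    unfolding monomial_def using prod.remove[of "{..n}" j "\<lambda>l. x l ^ (\<alpha>(j := a)) l"] assms by simp
qed

lemma norm_monomial_sq:
  "(cmod (monomial n \<alpha> x))\<^sup>2 = monomial n \<alpha> (\<lambda>l. (cmod (x l))\<^sup>2)"
  unfolding monomial_def
  by (simp add: prod_norm[symmetric] norm_power prod_power_distrib flip: power_mult)
    (simp add: mult.commute)

lemma monomial_lower: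
  assumes "j \<le> n" and "0 < \<alpha> j"
  shows "monomial n \<alpha> x = x j * monomial n (\<alpha>(j := \<alpha> j - 1)) x"
proof -
  have "monomial n \<alpha> x = monomial n (\<alpha>(j := Suc (\<alpha> j - 1))) x"
    using assms(2) by simp
  then show ?thesis unfolding monomial_upd[OF assms(1)] by (simp add: mult.assoc)
qed

lemma mons_raise_bij:
  assumes j: "j \<le> n"
  shows "bij_betw (\<lambda>\<gamma>. \<gamma>(j := Suc (\<gamma> j))) (mons n k) {\<alpha> \<in> mons n (Suc k). 0 < \<alpha> j}"
proof (rule bij_betw_byWitness[where f' = "\<lambda>\<alpha>. \<alpha>(j := \<alpha> j - 1)"])
  have sum_upd: "(\<Sum>l\<le>n. (\<gamma>(j := a)) l) + \<gamma> j = (\<Sum>l\<le>n. \<gamma> l) + a" for \<gamma> :: "nat \<Rightarrow> nat" and a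
  proof -
    have "(\<Sum>l\<in>{..n}-{j}. (\<gamma>(j := a)) l) = (\<Sum>l\<in>{..n}-{j}. \<gamma> l)" by (rule sum.cong) auto
    then show ?thesis using sum.remove[of "{..n}" j "\<gamma>(j := a)"] sum.remove[of "{..n}" j \<gamma>] j by simp
  qed
  show "(\<lambda>\<gamma>. \<gamma>(j := Suc (\<gamma> j))) ` mons n k \<subseteq> {\<alpha> \<in> mons n (Suc k). 0 < \<alpha> j}"
  proof (rule image_subsetI)
    fix \<gamma> assume "\<gamma> \<in> mons n k"
    then show "\<gamma>(j := Suc (\<gamma> j)) \<in> {\<alpha> \<in> mons n (Suc k). 0 < \<alpha> j}"
      using sum_upd[of \<gamma> "Suc (\<gamma> j)"] j by (auto simp: mons_def)
  qed
  show "(\<lambda>\<alpha>. \<alpha>(j := \<alpha> j - 1)) ` {\<alpha> \<in> mons n (Suc k). 0 < \<alpha> j} \<subseteq> mons n k"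
  proof (rule image_subsetI)
    fix \<alpha> assume "\<alpha> \<in> {\<alpha> \<in> mons n (Suc k). 0 < \<alpha> j}"
    then show "\<alpha>(j := \<alpha> j - 1) \<in> mons n k"
      using sum_upd[of \<alpha> "\<alpha> j - 1"] j by (auto simp: mons_def)
  qed
qed auto

lemma bw_weight_raise:
  assumes j: "j \<le> n"
  shows "bw_weight n (Suc k) (\<gamma>(j := Suc (\<gamma> j))) = real (Suc (\<gamma> j)) / real (Suc k) * bw_weight n k \<gamma>"
proof -
  define P where "P = (\<Prod>l\<in>{..n}-{j}. (fact (\<gamma> l) :: real))"
  have up: "(\<Prod>l\<le>n. (fact ((\<gamma>(j := a)) l) :: real)) = fact a * P" for a
    unfolding P_def using prod.remove[of "{..n}" j "\<lambda>l. (fact ((\<gamma>(j := a)) l) :: real)"] j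
    by (simp add: prod.cong[of "{..n}-{j}" _ "\<lambda>l. fact ((\<gamma>(j := a)) l)" "\<lambda>l. fact (\<gamma> l)"])
  have "(\<Prod>l\<le>n. (fact (\<gamma> l) :: real)) = fact (\<gamma> j) * P"
    using up[of "\<gamma> j"] by simp
  then show ?thesis
    unfolding bw_weight_def up by (simp add: field_simps fact_Suc del: of_nat_Suc)
qed

lemma sum_mons_lower:
  fixes F :: "(nat \<Rightarrow> nat) \<Rightarrow> real"
  assumes j: "j \<le> n"
  shows "(\<Sum>\<alpha>\<in>mons n (Suc k). real (\<alpha> j) * F (\<alpha>(j := \<alpha> j - 1)) / bw_weight n (Suc k) \<alpha>)
       = real (Suc k) * (\<Sum>\<gamma>\<in>mons n k. F \<gamma> / bw_weight n k \<gamma>)"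
proof -
  let ?T = "\<lambda>\<alpha>. real (\<alpha> j) * F (\<alpha>(j := \<alpha> j - 1)) / bw_weight n (Suc k) \<alpha>"
  have "(\<Sum>\<alpha>\<in>mons n (Suc k). ?T \<alpha>) = (\<Sum>\<alpha>\<in>{\<alpha> \<in> mons n (Suc k). 0 < \<alpha> j}. ?T \<alpha>)"
    by (rule sum.mono_neutral_right) (auto simp: finite_mons)
  also have "\<dots> = (\<Sum>\<gamma>\<in>mons n k. ?T (\<gamma>(j := Suc (\<gamma> j))))"
    using sum.reindex_bij_betw[OF mons_raise_bij[OF j, of k], of ?T] by simp
  also have "\<dots> = (\<Sum>\<gamma>\<in>mons n k. real (Suc k) * (F \<gamma> / bw_weight n k \<gamma>))"
    using bw_weight_pos[of n k] by (intro sum.cong refl) (simp add: bw_weight_raise[OF j] field_simps del: of_nat_Suc)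
  finally show ?thesis by (simp add: sum_distrib_left)
qed

lemma multinomial_theorem:
  fixes y :: "nat \<Rightarrow> real"
  shows "(\<Sum>\<gamma>\<in>mons n k. monomial n \<gamma> y / bw_weight n k \<gamma>) = (\<Sum>l\<le>n. y l) ^ k"
proof (induction k)
  case 0
  then show ?case by (simp add: mons_0 monomial_def bw_weight_def)
next
  case (Suc k)
  let ?S = "\<lambda>\<alpha>. monomial n \<alpha> y / bw_weight n (Suc k) \<alpha>"
  have lower: "real (\<alpha> j) * monomial n \<alpha> y = real (\<alpha> j) * (y j * monomial n (\<alpha>(j := \<alpha> j - 1)) y)"
    if "j \<le> n" for \<alpha> j
    using monomial_lower[OF that, of \<alpha> y] by (cases "\<alpha> j = 0") simp_all
  have "real (Suc k) * (\<Sum>\<alpha>\<in>mons n (Suc k). ?S \<alpha>) = (\<Sum>\<alpha>\<in>mons n (Suc k). (\<Sum>j\<le>n. real (\<alpha> j)) * ?S \<alpha>)"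
    unfolding sum_distrib_left
    by (intro sum.cong refl) (simp add: mons_def flip: of_nat_sum)
  also have "\<dots> = (\<Sum>j\<le>n. y j * (\<Sum>\<alpha>\<in>mons n (Suc k). real (\<alpha> j) * monomial n (\<alpha>(j := \<alpha> j - 1)) y / bw_weight n (Suc k) \<alpha>))"
    unfolding sum_distrib_right sum_distrib_left
    by (subst sum.swap) (intro sum.cong refl, simp add: lower mult_ac)
  also have "\<dots> = (\<Sum>j\<le>n. y j * (real (Suc k) * (\<Sum>l\<le>n. y l) ^ k))"
    by (intro sum.cong refl) (subst sum_mons_lower, auto simp: Suc.IH)
  also have "\<dots> = real (Suc k) * ((\<Sum>l\<le>n. y l) * (\<Sum>l\<le>n. y l) ^ k)"
    by (simp add: sum_distrib_left sum_distrib_right mult_ac)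
  finally show ?case by (simp del: of_nat_Suc)
qed

section \<open>Bombieri--Weyl bounds for evaluation and derivative\<close>

definition eq_norm_sq :: "nat \<Rightarrow> (nat \<Rightarrow> nat) \<Rightarrow> (nat \<Rightarrow> (nat \<Rightarrow> nat) \<Rightarrow> complex) \<Rightarrow> nat \<Rightarrow> real" where
  "eq_norm_sq n d h i = (\<Sum>\<alpha>\<in>mons n (d i). bw_weight n (d i) \<alpha> * (cmod (h i \<alpha>))\<^sup>2)"

lemma eq_norm_sq_nonneg: "0 \<le> eq_norm_sq n d h i"
  unfolding eq_norm_sq_def using bw_weight_pos by (intro sum_nonneg) (simp add: less_imp_le)

lemma bw_norm_eq: "bw_norm n d h = sqrt (\<Sum>i<n. eq_norm_sq n d h i)"
proof -
  have Re_term: "Re (of_real w * a * cnj a) = w * (cmod a)\<^sup>2" for w and a :: complex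
    by (simp add: mult.assoc complex_norm_square[symmetric] of_real_mult[symmetric] del: of_real_mult)
  show ?thesis
    unfolding bw_norm_def bw_inner_def eq_norm_sq_def bw_weight_def Re_sum Re_term ..
qed

lemma bw_norm_nonneg: "0 \<le> bw_norm n d h"
  unfolding bw_norm_eq by (simp add: sum_nonneg eq_norm_sq_nonneg)

lemma bw_norm_pos:
  assumes H: "in_Hd n d f" and nz: "f \<noteq> (\<lambda>i \<alpha>. 0)"
  shows "0 < bw_norm n d f"
proof (rule ccontr)
  assume "\<not> 0 < bw_norm n d f"
  moreover have "0 \<le> (\<Sum>i<n. eq_norm_sq n d f i)" by (simp add: sum_nonneg eq_norm_sq_nonneg)
  ultimately have "(\<Sum>i<n. eq_norm_sq n d f i) = 0" unfolding bw_norm_eq by auto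
  then have "\<forall>i<n. eq_norm_sq n d f i = 0"
    by (subst (asm) sum_nonneg_eq_0_iff) (auto simp: eq_norm_sq_nonneg)
  then have zero: "\<forall>i<n. \<forall>\<alpha>\<in>mons n (d i). bw_weight n (d i) \<alpha> * (cmod (f i \<alpha>))\<^sup>2 = 0"
    unfolding eq_norm_sq_def using bw_weight_pos
    by (subst (asm) sum_nonneg_eq_0_iff) (auto simp: finite_mons less_imp_le)
  have "f i \<alpha> = 0" for i \<alpha>
  proof (cases "i < n \<and> \<alpha> \<in> mons n (d i)")
    case True
    with zero have "bw_weight n (d i) \<alpha> * (cmod (f i \<alpha>))\<^sup>2 = 0" by blast
    then show ?thesis using bw_weight_pos[of n "d i" \<alpha>] by simp
  qed (use H in \<open>auto simp: in_Hd_def\<close>)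
  then show False using nz by blast
qed

lemma vnorm_le_bw_norm:
  assumes "\<And>i. i < n \<Longrightarrow> cmod (u i) \<le> K * sqrt (eq_norm_sq n d h i)" and "0 \<le> K"
  shows "vnorm n u \<le> K * bw_norm n d h"
proof -
  have "vnorm n u \<le> L2_set (\<lambda>i. K * sqrt (eq_norm_sq n d h i)) {..<n}"
    unfolding vnorm_eq_L2_set using assms by (intro L2_set_mono) auto
  also have "\<dots> = K * bw_norm n d h"
    unfolding bw_norm_eq L2_set_right_distrib[OF \<open>0 \<le> K\<close>, symmetric] L2_set_def
    by (simp add: eq_norm_sq_nonneg)
  finally show ?thesis .
qed

text \<open>Evaluation bound: |h_i(x)| \<le> ||h_i|| ||x||^(d_i), by weighted Cauchy--Schwarz and the
  multinomial theorem.\<close>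
lemma eval_bound: "cmod (peval n d h i x) \<le> sqrt (eq_norm_sq n d h i) * vnorm (Suc n) x ^ d i"
proof -
  have "cmod (peval n d h i x)
      \<le> sqrt (eq_norm_sq n d h i) * sqrt (\<Sum>\<alpha>\<in>mons n (d i). (cmod (monomial n \<alpha> x))\<^sup>2 / bw_weight n (d i) \<alpha>)"
    unfolding peval_def eq_norm_sq_def monomial_def[symmetric]
    by (rule weighted_cauchy_schwarz) (rule bw_weight_pos)
  also have "(\<Sum>\<alpha>\<in>mons n (d i). (cmod (monomial n \<alpha> x))\<^sup>2 / bw_weight n (d i) \<alpha>) = ((vnorm (Suc n) x)\<^sup>2) ^ d i"
    unfolding norm_monomial_sq multinomial_theorem vnorm_sq by (simp add: lessThan_Suc_atMost)
  finally show ?thesis by (simp add: real_sqrt_power vnorm_nonneg)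
qed

lemma ppartial_eq:
  assumes "j \<le> n"
  shows "ppartial n d h i j x = (\<Sum>\<alpha>\<in>mons n (d i). h i \<alpha> * of_nat (\<alpha> j) * monomial n (\<alpha>(j := \<alpha> j - 1)) x)"
  unfolding ppartial_def monomial_upd[OF assms] by (simp add: mult.assoc)

lemma sum_lowered_monomials:
  assumes "j \<le> n"
  shows "(\<Sum>\<alpha>\<in>mons n (Suc k). real (\<alpha> j) * (cmod (monomial n (\<alpha>(j := \<alpha> j - 1)) x))\<^sup>2 / bw_weight n (Suc k) \<alpha>)
       = real (Suc k) * ((vnorm (Suc n) x)\<^sup>2) ^ k"
  unfolding norm_monomial_sq sum_mons_lower[OF assms, where F = "\<lambda>\<gamma>. monomial n \<gamma> (\<lambda>l. (cmod (x l))\<^sup>2)"]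
    multinomial_theorem vnorm_sq by (simp add: lessThan_Suc_atMost)

lemma derivative_coefficients_bound:
  fixes n k :: nat and x z :: "nat \<Rightarrow> complex"
  defines "c \<equiv> \<lambda>\<alpha>. \<Sum>j\<le>n. of_nat (\<alpha> j) * monomial n (\<alpha>(j := \<alpha> j - 1)) x * z j"
  shows "(\<Sum>\<alpha>\<in>mons n (Suc k). (cmod (c \<alpha>))\<^sup>2 / bw_weight n (Suc k) \<alpha>)
     \<le> (real (Suc k) * vnorm (Suc n) x ^ k * vnorm (Suc n) z)\<^sup>2"
proof -
  define M where "M = mons n (Suc k)"
  define L where "L \<alpha> j = monomial n (\<alpha>(j := \<alpha> j - 1)) x" for \<alpha> j
  have coeff: "(cmod (c \<alpha>))\<^sup>2 \<le> real (Suc k) * (\<Sum>j\<le>n. real (\<alpha> j) * (cmod (L \<alpha> j) * cmod (z j))\<^sup>2)"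
    if "\<alpha> \<in> M" for \<alpha>
  proof -
    have "cmod (c \<alpha>) \<le> (\<Sum>j\<le>n. real (\<alpha> j) * (cmod (L \<alpha> j) * cmod (z j)))"
      unfolding c_def L_def by (rule order_trans[OF norm_sum]) (simp add: norm_mult mult.assoc)
    then have "(cmod (c \<alpha>))\<^sup>2 \<le> (\<Sum>j\<le>n. real (\<alpha> j) * (cmod (L \<alpha> j) * cmod (z j)))\<^sup>2"
      by (intro power_mono) auto
    also have "\<dots> \<le> (\<Sum>j\<le>n. real (\<alpha> j)) * (\<Sum>j\<le>n. real (\<alpha> j) * (cmod (L \<alpha> j) * cmod (z j))\<^sup>2)"
      by (rule square_weighted_sum_le) simp
    also have "(\<Sum>j\<le>n. real (\<alpha> j)) = real (Suc k)"
      using that unfolding M_def mons_def by (simp flip: of_nat_sum)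
    finally show ?thesis .
  qed
  have "(\<Sum>\<alpha>\<in>M. (cmod (c \<alpha>))\<^sup>2 / bw_weight n (Suc k) \<alpha>)
      \<le> (\<Sum>\<alpha>\<in>M. real (Suc k) * (\<Sum>j\<le>n. real (\<alpha> j) * (cmod (L \<alpha> j) * cmod (z j))\<^sup>2) / bw_weight n (Suc k) \<alpha>)"
    using coeff bw_weight_pos by (intro sum_mono divide_right_mono) (auto simp: less_imp_le)
  also have "\<dots> = real (Suc k) * (\<Sum>j\<le>n. (cmod (z j))\<^sup>2 * (\<Sum>\<alpha>\<in>M. real (\<alpha> j) * (cmod (L \<alpha> j))\<^sup>2 / bw_weight n (Suc k) \<alpha>))"
    by (simp add: sum_distrib_left sum_divide_distrib sum.swap[of _ M] power_mult_distrib mult_ac)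
  also have "\<dots> = real (Suc k) * (\<Sum>j\<le>n. (cmod (z j))\<^sup>2 * (real (Suc k) * ((vnorm (Suc n) x)\<^sup>2) ^ k))"
    unfolding M_def L_def by (intro arg_cong[where f = "(*) _"] sum.cong refl) (subst sum_lowered_monomials, auto)
  also have "\<dots> = real (Suc k) * (real (Suc k) * ((vnorm (Suc n) x)\<^sup>2) ^ k * (vnorm (Suc n) z)\<^sup>2)"
    by (simp add: vnorm_sq[of "Suc n" z] lessThan_Suc_atMost sum_distrib_left sum_distrib_right mult_ac
        del: of_nat_Suc)
  also have "\<dots> = (real (Suc k) * vnorm (Suc n) x ^ k * vnorm (Suc n) z)\<^sup>2"
    by (simp add: power2_eq_square power_mult_distrib mult_ac del: of_nat_Suc)
  finally show ?thesis unfolding M_def .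
qed

text \<open>Derivative bound: |Dh_i(x) z| \<le> d_i ||h_i|| ||x||^(d_i - 1) ||z||, by weighted
  Cauchy--Schwarz against the coefficient bound.\<close>
lemma deriv_bound:
  assumes "1 \<le> d i"
  shows "cmod (Dfapp n d h x z i)
     \<le> real (d i) * sqrt (eq_norm_sq n d h i) * vnorm (Suc n) x ^ (d i - 1) * vnorm (Suc n) z"
proof (cases "i < n")
  case False
  then show ?thesis by (simp add: Dfapp_def eq_norm_sq_nonneg vnorm_nonneg)
next
  case True
  obtain k where k: "d i = Suc k" using assms by (cases "d i") auto
  define c where "c \<alpha> = (\<Sum>j\<le>n. of_nat (\<alpha> j) * monomial n (\<alpha>(j := \<alpha> j - 1)) x * z j)" for \<alpha>
  define Q where "Q = (\<Sum>\<alpha>\<in>mons n (d i). (cmod (c \<alpha>))\<^sup>2 / bw_weight n (d i) \<alpha>)"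
  have "Dfapp n d h x z i
      = (\<Sum>j\<le>n. \<Sum>\<alpha>\<in>mons n (d i). h i \<alpha> * (of_nat (\<alpha> j) * monomial n (\<alpha>(j := \<alpha> j - 1)) x * z j))"
    unfolding Dfapp_def using True
    by simp (intro sum.cong refl, simp add: ppartial_eq sum_distrib_left sum_distrib_right mult_ac)
  also have "\<dots> = (\<Sum>\<alpha>\<in>mons n (d i). h i \<alpha> * c \<alpha>)"
    unfolding c_def by (simp add: sum_distrib_left sum.swap[of _ "{..n}"])
  finally have CS: "cmod (Dfapp n d h x z i) \<le> sqrt (eq_norm_sq n d h i) * sqrt Q"
    unfolding Q_def eq_norm_sq_def by (simp add: weighted_cauchy_schwarz bw_weight_pos)
  have "Q \<le> (real (d i) * vnorm (Suc n) x ^ (d i - 1) * vnorm (Suc n) z)\<^sup>2"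
    unfolding Q_def c_def k using derivative_coefficients_bound by simp
  then have "sqrt Q \<le> real (d i) * vnorm (Suc n) x ^ (d i - 1) * vnorm (Suc n) z"
    by (simp add: real_sqrt_le_iff real_le_lsqrt vnorm_nonneg)
  then have "sqrt (eq_norm_sq n d h i) * sqrt Q
      \<le> sqrt (eq_norm_sq n d h i) * (real (d i) * vnorm (Suc n) x ^ (d i - 1) * vnorm (Suc n) z)"
    by (rule mult_left_mono) (simp add: eq_norm_sq_nonneg)
  with CS show ?thesis by (simp add: mult_ac)
qed

lemma Dfapp_cspace: "Dfapp n d h x z \<in> cspace n"
  unfolding Dfapp_def cspace_def by simp

lemma Dfapp_zero: "Dfapp n d h x (\<lambda>j. 0) = (\<lambda>i. 0)"
  unfolding Dfapp_def by (rule ext) simp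

lemma Dfapp_add: "Dfapp n d h x (\<lambda>j. a j + b j) = (\<lambda>i. Dfapp n d h x a i + Dfapp n d h x b i)"
  unfolding Dfapp_def by (auto simp: algebra_simps sum.distrib)

lemma Dfapp_diff: "Dfapp n d h x (\<lambda>j. a j - b j) = (\<lambda>i. Dfapp n d h x a i - Dfapp n d h x b i)"
  unfolding Dfapp_def by (auto simp: algebra_simps sum_subtractf)

lemma Dfapp_scale: "Dfapp n d h x (\<lambda>j. c * a j) = (\<lambda>i. c * Dfapp n d h x a i)"
  unfolding Dfapp_def by (auto simp: sum_distrib_left mult_ac)

lemma Dfapp_sum:
  "Dfapp n d h x (\<lambda>j. \<Sum>k\<in>I. c k * b k j) = (\<lambda>i. \<Sum>k\<in>I. c k * Dfapp n d h x (b k) i)"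
  unfolding Dfapp_def by (auto simp: sum_distrib_left mult_ac intro!: sum.swap)

lemma Dfapp_sys_diff:
  "Dfapp n d (sys_diff h1 h2) x z = (\<lambda>i. Dfapp n d h1 x z i - Dfapp n d h2 x z i)"
  unfolding Dfapp_def ppartial_def sys_diff_def by (auto simp: algebra_simps sum_subtractf)

lemma Dfapp_sys_scale: "Dfapp n d (sys_scale c h) x z = (\<lambda>i. c * Dfapp n d h x z i)"
  unfolding Dfapp_def ppartial_def sys_scale_def by (auto simp: sum_distrib_left mult_ac)

lemma peval_sys_diff: "peval n d (sys_diff h1 h2) i x = peval n d h1 i x - peval n d h2 i x"
  unfolding peval_def sys_diff_def by (simp add: algebra_simps sum_subtractf)

lemma peval_sys_scale: "peval n d (sys_scale c h) i x = c * peval n d h i x"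
  unfolding peval_def sys_scale_def by (simp add: sum_distrib_left mult_ac)

lemma hinner_add: "hinner N (\<lambda>j. a j + b j) x = hinner N a x + hinner N b x"
  unfolding hinner_def by (simp add: distrib_right sum.distrib)

lemma hinner_diff: "hinner N (\<lambda>j. a j - b j) x = hinner N a x - hinner N b x"
  unfolding hinner_def by (simp add: left_diff_distrib sum_subtractf)

lemma hinner_scale: "hinner N (\<lambda>j. c * a j) x = c * hinner N a x"
  unfolding hinner_def by (simp add: sum_distrib_left mult.assoc)

lemma hinner_sum: "hinner N (\<lambda>j. \<Sum>k\<in>I. c k * b k j) x = (\<Sum>k\<in>I. c k * hinner N (b k) x)"
  unfolding hinner_def by (simp add: sum_distrib_left sum_distrib_right mult.assoc sum.swap[of _ I])

lemma perp_zero: "(\<lambda>j. 0) \<in> perp n x"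
  unfolding perp_def cspace_def hinner_def by simp

lemma perp_diff: "a \<in> perp n x \<Longrightarrow> b \<in> perp n x \<Longrightarrow> (\<lambda>j. a j - b j) \<in> perp n x"
  unfolding perp_def by (auto simp: hinner_diff cspace_def)

lemma perp_scale: "a \<in> perp n x \<Longrightarrow> (\<lambda>j. c * a j) \<in> perp n x"
  unfolding perp_def by (auto simp: hinner_scale cspace_def)

lemma perp_sum: "(\<And>k. k \<in> I \<Longrightarrow> b k \<in> perp n x) \<Longrightarrow> (\<lambda>j. \<Sum>k\<in>I. c k * b k j) \<in> perp n x"
  unfolding perp_def by (auto simp: hinner_sum cspace_def)

section \<open>Square matrices: injective iff surjective\<close>

definition sqmat :: "nat \<Rightarrow> (nat \<Rightarrow> nat \<Rightarrow> complex) \<Rightarrow> complex mat" where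
  "sqmat N M = mat N N (\<lambda>(i, j). M i j)"

lemma sqmat_carrier: "sqmat N M \<in> carrier_mat N N"
  unfolding sqmat_def by simp

lemma sqmat_dim [simp]: "dim_row (sqmat N M) = N" "dim_col (sqmat N M) = N"
  unfolding sqmat_def by simp_all

lemma sqmat_mult_vec:
  "v \<in> carrier_vec N \<Longrightarrow> i < N \<Longrightarrow> (sqmat N M *\<^sub>v v) $ i = (\<Sum>j<N. M i j * v $ j)"
  unfolding sqmat_def by (auto simp: scalar_prod_def lessThan_atLeast0 intro!: sum.cong)

lemma square_inj_imp_surj:
  fixes M :: "nat \<Rightarrow> nat \<Rightarrow> complex"
  assumes inj: "\<And>z. \<forall>i<N. (\<Sum>j<N. M i j * z j) = 0 \<Longrightarrow> \<forall>j<N. z j = 0"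
  shows "\<exists>z. \<forall>i<N. (\<Sum>j<N. M i j * z j) = b i"
proof -
  let ?A = "sqmat N M"
  have "det ?A \<noteq> 0"
  proof
    assume "det ?A = 0"
    then obtain v where v: "v \<in> carrier_vec N" "v \<noteq> 0\<^sub>v N" "?A *\<^sub>v v = 0\<^sub>v N"
      using det_0_iff_vec_prod_zero[OF sqmat_carrier] by auto
    then have "\<forall>i<N. (\<Sum>j<N. M i j * v $ j) = 0"
      by (metis sqmat_mult_vec index_zero_vec(1))
    then have "v = 0\<^sub>v N" using inj v(1) by (intro eq_vecI) auto
    with v(2) show False by simp
  qed
  from det_non_zero_imp_unit[OF sqmat_carrier this, unfolded Units_def, of "()"]
  obtain B where B: "B \<in> carrier_mat N N" and AB: "?A * B = 1\<^sub>m N"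
    by (auto simp: ring_mat_def)
  define w where "w = B *\<^sub>v vec N b"
  have "?A *\<^sub>v w = (?A * B) *\<^sub>v vec N b"
    unfolding w_def by (rule assoc_mult_mat_vec[OF sqmat_carrier B, symmetric]) simp
  also have "\<dots> = vec N b" using AB by simp
  finally have "?A *\<^sub>v w = vec N b" .
  then have "\<forall>i<N. (\<Sum>j<N. M i j * w $ j) = b i"
    using B unfolding w_def by (metis sqmat_mult_vec index_vec mult_mat_vec_carrier vec_carrier)
  then show ?thesis by blast
qed

text \<open>\<dots> and surjectivity implies injectivity: a right inverse built column by column is
  also a left inverse.\<close>
lemma square_surj_imp_inj:
  fixes M :: "nat \<Rightarrow> nat \<Rightarrow> complex"
  assumes surj: "\<And>b. \<exists>z. \<forall>i<N. (\<Sum>j<N. M i j * z j) = b i"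
    and z0: "\<forall>i<N. (\<Sum>j<N. M i j * z j) = 0"
  shows "\<forall>j<N. z j = 0"
proof -
  let ?A = "sqmat N M"
  obtain col where col: "\<And>k i. i < N \<Longrightarrow> (\<Sum>j<N. M i j * col k j) = (if i = k then 1 else 0)"
    using surj[of "\<lambda>i. if i = _ then 1 else 0"] by metis
  define B where "B = mat N N (\<lambda>(j, k). col k j)"
  have B: "B \<in> carrier_mat N N" unfolding B_def by simp
  have "?A * B = 1\<^sub>m N"
    by (rule eq_matI) (auto simp: B_def sqmat_def scalar_prod_def atLeast0LessThan col)
  then have BA: "B * ?A = 1\<^sub>m N" by (rule mat_mult_left_right_inverse[OF sqmat_carrier B])
  have "?A *\<^sub>v vec N z = 0\<^sub>v N"
    using z0 by (intro eq_vecI) (subst sqmat_mult_vec, auto)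
  have "vec N z = (B * ?A) *\<^sub>v vec N z" using BA by simp
  also have "\<dots> = B *\<^sub>v (?A *\<^sub>v vec N z)"
    by (rule assoc_mult_mat_vec[OF B sqmat_carrier]) simp
  also have "\<dots> = 0\<^sub>v N" using B \<open>?A *\<^sub>v vec N z = 0\<^sub>v N\<close> by auto
  finally show ?thesis by (metis index_vec index_zero_vec(1))
qed

section \<open>Unique solvability of Df(x) z = w on x^perp\<close>

definition uniquely_solvable :: "nat \<Rightarrow> (nat \<Rightarrow> nat) \<Rightarrow> (nat \<Rightarrow> (nat \<Rightarrow> nat) \<Rightarrow> complex) \<Rightarrow> (nat \<Rightarrow> complex) \<Rightarrow> bool" where
  "uniquely_solvable n d h x \<longleftrightarrow> (\<forall>w\<in>cspace n. \<exists>!z. z \<in> perp n x \<and> Dfapp n d h x z = w)"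

text \<open>The (n+1) x (n+1) matrix of z \<mapsto> (Df(x) z, \<langle>z, x\<rangle>): Df(x)|_{x^perp} is bijective
  exactly when this square matrix is.\<close>
definition bordered_jacobian :: "nat \<Rightarrow> (nat \<Rightarrow> nat) \<Rightarrow> (nat \<Rightarrow> (nat \<Rightarrow> nat) \<Rightarrow> complex) \<Rightarrow> (nat \<Rightarrow> complex) \<Rightarrow> nat \<Rightarrow> nat \<Rightarrow> complex" where
  "bordered_jacobian n d h x i j = (if i < n then ppartial n d h i j x else cnj (x j))"

lemma bordered_jacobian_row:
  "i < n \<Longrightarrow> (\<Sum>j<Suc n. bordered_jacobian n d h x i j * z j) = Dfapp n d h x z i"
  unfolding bordered_jacobian_def Dfapp_def by (simp add: lessThan_Suc_atMost)

lemma bordered_jacobian_last: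
  "(\<Sum>j<Suc n. bordered_jacobian n d h x n j * z j) = hinner (Suc n) z x"
  unfolding bordered_jacobian_def hinner_def by (simp add: mult.commute)

lemma bordered_solution:
  assumes Mz: "\<forall>i<Suc n. (\<Sum>j<Suc n. bordered_jacobian n d h x i j * z j) = (if i < n then w i else 0)"
    and w: "w \<in> cspace n"
  defines "z' \<equiv> \<lambda>j. if j < Suc n then z j else 0"
  shows "z' \<in> perp n x \<and> Dfapp n d h x z' = w"
proof -
  have same: "(\<Sum>j<Suc n. bordered_jacobian n d h x i j * z' j) = (\<Sum>j<Suc n. bordered_jacobian n d h x i j * z j)" for i
    unfolding z'_def by (rule sum.cong) auto
  have "hinner (Suc n) z' x = 0"
    using Mz same[of n] bordered_jacobian_last[of n d h x z'] by simp
  then have "z' \<in> perp n x" unfolding perp_def cspace_def z'_def by auto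
  moreover have "Dfapp n d h x z' i = w i" for i
    using Mz same[of i] bordered_jacobian_row[of i n d h x z'] w
    by (cases "i < n") (auto simp: Dfapp_def cspace_def)
  ultimately show ?thesis by auto
qed

text \<open>Injectivity of Df(x) on x^perp already gives unique solvability (dimension count).\<close>
lemma uniquely_solvable_if_inj:
  assumes inj: "\<And>z. z \<in> perp n x \<Longrightarrow> Dfapp n d h x z = (\<lambda>i. 0) \<Longrightarrow> z = (\<lambda>j. 0)"
  shows "uniquely_solvable n d h x"
  unfolding uniquely_solvable_def
proof
  fix w assume w: "w \<in> cspace n"
  have injM: "\<forall>j<Suc n. z j = 0"
    if "\<forall>i<Suc n. (\<Sum>j<Suc n. bordered_jacobian n d h x i j * z j) = 0" for z
  proof -
    have "(\<lambda>j. if j < Suc n then z j else 0) = (\<lambda>j. 0)"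
      using bordered_solution[of n d h x z "\<lambda>i. 0"] that inj by (simp add: cspace_def)
    then show ?thesis by (metis (mono_tags, lifting))
  qed
  have "\<exists>z. \<forall>i<Suc n. (\<Sum>j<Suc n. bordered_jacobian n d h x i j * z j) = (if i < n then w i else 0)"
    by (rule square_inj_imp_surj) (erule injM)
  then obtain z where
    "\<forall>i<Suc n. (\<Sum>j<Suc n. bordered_jacobian n d h x i j * z j) = (if i < n then w i else 0)"
    by (rule exE)
  define z' where "z' = (\<lambda>j. if j < Suc n then z j else 0)"
  have z': "z' \<in> perp n x \<and> Dfapp n d h x z' = w"
    unfolding z'_def using \<open>\<forall>i<Suc n. _\<close> w by (rule bordered_solution)
  show "\<exists>!z. z \<in> perp n x \<and> Dfapp n d h x z = w"
  proof (rule ex1I[of _ z'])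
    show "z' \<in> perp n x \<and> Dfapp n d h x z' = w" by (rule z')
  next
    fix y assume y: "y \<in> perp n x \<and> Dfapp n d h x y = w"
    have "(\<lambda>j. y j - z' j) = (\<lambda>j. 0)"
    proof (rule inj)
      show "(\<lambda>j. y j - z' j) \<in> perp n x" using y z' by (intro perp_diff) simp_all
      show "Dfapp n d h x (\<lambda>j. y j - z' j) = (\<lambda>i. 0)" using y z' by (simp add: Dfapp_diff)
    qed
    then show "y = z'" by (simp add: fun_eq_iff)
  qed
qed

lemma uniquely_solvable_if_rank_full:
  assumes rk: "rank_full n d h x" and xC: "x \<in> cspace (Suc n)" and xnz: "x \<noteq> (\<lambda>j. 0)"
  shows "uniquely_solvable n d h x"
proof (rule uniquely_solvable_if_inj)
  fix z assume zp: "z \<in> perp n x" and z0: "Dfapp n d h x z = (\<lambda>i. 0)"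
  have surj: "\<exists>z. \<forall>i<Suc n. (\<Sum>j<Suc n. bordered_jacobian n d h x i j * z j) = b i" for b
  proof -
    define r2 where "r2 = (vnorm (Suc n) x)\<^sup>2"
    have r2: "0 < r2" unfolding r2_def using vnorm_pos[OF xC xnz] by simp
    define c where "c = b n / of_real r2"
    define t where "t = (\<lambda>i. if i < n then b i - c * Dfapp n d h x x i else 0)"
    have "t \<in> cspace n" unfolding t_def cspace_def by simp
    then obtain y where y: "y \<in> perp n x" "Dfapp n d h x y = t"
      using rk unfolding rank_full_def by (metis imageE)
    have "(\<Sum>j<Suc n. bordered_jacobian n d h x i j * (y j + c * x j)) = b i" if "i < Suc n" for i
    proof (cases "i < n")
      case True
      then have "(\<Sum>j<Suc n. bordered_jacobian n d h x i j * (y j + c * x j))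
          = Dfapp n d h x (\<lambda>j. y j + c * x j) i" by (rule bordered_jacobian_row)
      then show ?thesis using True by (simp add: Dfapp_add Dfapp_scale y(2) t_def)
    next
      case False
      with that have "i = n" by simp
      have "(\<Sum>j<Suc n. bordered_jacobian n d h x n j * (y j + c * x j))
          = hinner (Suc n) y x + c * hinner (Suc n) x x"
        unfolding bordered_jacobian_last hinner_add hinner_scale ..
      then show ?thesis using \<open>i = n\<close> y(1) r2 by (simp add: perp_def hinner_self c_def r2_def)
    qed
    then show ?thesis by (intro exI allI impI)
  qed
  have "\<forall>i<Suc n. (\<Sum>j<Suc n. bordered_jacobian n d h x i j * z j) = 0"
  proof (intro allI impI)
    fix i assume "i < Suc n"
    then consider "i < n" | "i = n" by linarith
    then show "(\<Sum>j<Suc n. bordered_jacobian n d h x i j * z j) = 0"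
    proof cases
      case 1
      then show ?thesis using z0 by (subst bordered_jacobian_row) simp_all
    next
      case 2
      then show ?thesis using zp bordered_jacobian_last[of n d h x z] by (simp add: perp_def)
    qed
  qed
  with surj have low: "\<forall>j<Suc n. z j = 0" by (rule square_surj_imp_inj)
  show "z = (\<lambda>j. 0)"
  proof
    fix j
    show "z j = 0"
      using low zp by (cases "j < Suc n") (simp_all add: perp_def cspace_def)
  qed
qed

lemma rinv_solves:
  assumes "uniquely_solvable n d h x" and "w \<in> cspace n"
  shows "rinv n d h x w \<in> perp n x \<and> Dfapp n d h x (rinv n d h x w) = w"
proof -
  have "\<exists>!z. z \<in> perp n x \<and> Dfapp n d h x z = w"
    using assms unfolding uniquely_solvable_def by blast
  then show ?thesis unfolding rinv_def by (rule theI')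
qed

lemma rinv_unique:
  assumes "uniquely_solvable n d h x" and "z \<in> perp n x" and "Dfapp n d h x z = w"
  shows "rinv n d h x w = z"
proof -
  have "w \<in> cspace n" using assms(3) Dfapp_cspace by metis
  then have "\<exists>!z. z \<in> perp n x \<and> Dfapp n d h x z = w"
    using assms(1) unfolding uniquely_solvable_def by blast
  then show ?thesis unfolding rinv_def using assms by (intro the1_equality) auto
qed

section \<open>The condition number as an optimal lower-bound constant\<close>

definition deg_scale :: "nat \<Rightarrow> (nat \<Rightarrow> nat) \<Rightarrow> (nat \<Rightarrow> complex) \<Rightarrow> nat \<Rightarrow> real" where
  "deg_scale n d x i = sqrt (real (d i)) * vnorm (Suc n) x ^ (d i - 1)"

definition diag_scale :: "nat \<Rightarrow> (nat \<Rightarrow> nat) \<Rightarrow> (nat \<Rightarrow> complex) \<Rightarrow> (nat \<Rightarrow> complex) \<Rightarrow> nat \<Rightarrow> complex" where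
  "diag_scale n d x w = (\<lambda>i. if i < n then of_real (deg_scale n d x i) * w i else 0)"

definition diag_unscale :: "nat \<Rightarrow> (nat \<Rightarrow> nat) \<Rightarrow> (nat \<Rightarrow> complex) \<Rightarrow> (nat \<Rightarrow> complex) \<Rightarrow> nat \<Rightarrow> complex" where
  "diag_unscale n d x u = (\<lambda>i. if i < n then u i / of_real (deg_scale n d x i) else 0)"

definition ndiff :: "nat \<Rightarrow> (nat \<Rightarrow> nat) \<Rightarrow> (nat \<Rightarrow> (nat \<Rightarrow> nat) \<Rightarrow> complex) \<Rightarrow> (nat \<Rightarrow> complex) \<Rightarrow> (nat \<Rightarrow> complex) \<Rightarrow> nat \<Rightarrow> complex" where
  "ndiff n d h x z = diag_unscale n d x (Dfapp n d h x z)"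

lemma deg_scale_pos: "1 \<le> d i \<Longrightarrow> 0 < vnorm (Suc n) x \<Longrightarrow> 0 < deg_scale n d x i"
  unfolding deg_scale_def by simp

lemma diag_scale_cspace: "diag_scale n d x w \<in> cspace n"
  unfolding diag_scale_def cspace_def by simp

lemma diag_unscale_cspace: "diag_unscale n d x u \<in> cspace n"
  unfolding diag_unscale_def cspace_def by simp

lemma diag_unscale_scale:
  "w \<in> cspace n \<Longrightarrow> \<forall>i<n. 0 < deg_scale n d x i \<Longrightarrow> diag_unscale n d x (diag_scale n d x w) = w"
  unfolding diag_unscale_def diag_scale_def cspace_def by (rule ext) auto

lemma diag_scale_unscale:
  "u \<in> cspace n \<Longrightarrow> \<forall>i<n. 0 < deg_scale n d x i \<Longrightarrow> diag_scale n d x (diag_unscale n d x u) = u"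
  unfolding diag_unscale_def diag_scale_def cspace_def by (rule ext) auto

lemma diag_scale_mult: "diag_scale n d x (\<lambda>i. c * w i) = (\<lambda>i. c * diag_scale n d x w i)"
  unfolding diag_scale_def by (rule ext) simp

lemma diag_unscale_mult: "diag_unscale n d x (\<lambda>i. c * u i) = (\<lambda>i. c * diag_unscale n d x u i)"
  unfolding diag_unscale_def by (rule ext) simp

lemma diag_unscale_diff:
  "diag_unscale n d x (\<lambda>i. a i - b i) = (\<lambda>i. diag_unscale n d x a i - diag_unscale n d x b i)"
  unfolding diag_unscale_def by (rule ext) (simp add: diff_divide_distrib)

lemma ndiff_diff: "ndiff n d h x (\<lambda>j. a j - b j) = (\<lambda>i. ndiff n d h x a i - ndiff n d h x b i)"
  unfolding ndiff_def Dfapp_diff diag_unscale_diff ..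

lemma ndiff_sys_scale: "ndiff n d (sys_scale c h) x z = (\<lambda>i. c * ndiff n d h x z i)"
  unfolding ndiff_def Dfapp_sys_scale diag_unscale_mult ..

lemma ndiff_sys_diff:
  "ndiff n d (sys_diff h1 h2) x z = (\<lambda>i. ndiff n d h1 x z i - ndiff n d h2 x z i)"
  unfolding ndiff_def Dfapp_sys_diff diag_unscale_diff ..

definition inv_norms :: "nat \<Rightarrow> (nat \<Rightarrow> nat) \<Rightarrow> (nat \<Rightarrow> (nat \<Rightarrow> nat) \<Rightarrow> complex) \<Rightarrow> (nat \<Rightarrow> complex) \<Rightarrow> real set" where
  "inv_norms n d h x =
     {vnorm (Suc n) (rinv n d h x (diag_scale n d x w)) | w. w \<in> cspace n \<and> vnorm n w \<le> 1}"

lemma mu_eq_Sup: "mu n d h x = bw_norm n d h * Sup (inv_norms n d h x)"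
  unfolding mu_def opnorm_def inv_norms_def diag_scale_def deg_scale_def ..

text \<open>The inverse is bounded: expanding w in the standard basis bounds every element of the set.\<close>
lemma inv_norms_bdd:
  assumes US: "uniquely_solvable n d h x"
  shows "bdd_above (inv_norms n d h x)"
proof -
  define e where "e k = (\<lambda>i::nat. if i = k then (1::complex) else 0)" for k :: nat
  define b where "b k = rinv n d h x (diag_scale n d x (e k))" for k
  have b: "b k \<in> perp n x \<and> Dfapp n d h x (b k) = diag_scale n d x (e k)" for k
    unfolding b_def by (rule rinv_solves[OF US diag_scale_cspace])
  have "t \<le> (\<Sum>k<n. vnorm (Suc n) (b k))" if t_mem: "t \<in> inv_norms n d h x" for t
  proof -
    obtain w where t: "t = vnorm (Suc n) (rinv n d h x (diag_scale n d x w))"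
      and w: "w \<in> cspace n" "vnorm n w \<le> 1"
      using t_mem unfolding inv_norms_def by blast
    have Db: "(\<Sum>k<n. w k * diag_scale n d x (e k) i) = diag_scale n d x w i" for i
    proof -
      have "(\<Sum>k<n. w k * diag_scale n d x (e k) i) = (\<Sum>k<n. if k = i then w k * diag_scale n d x (e i) i else 0)"
        by (intro sum.cong) (auto simp: diag_scale_def e_def)
      also have "\<dots> = diag_scale n d x w i" by (simp add: diag_scale_def e_def)
      finally show ?thesis .
    qed
    have "rinv n d h x (diag_scale n d x w) = (\<lambda>j. \<Sum>k<n. w k * b k j)"
      using b by (intro rinv_unique[OF US] perp_sum) (auto simp: Dfapp_sum Db)
    then have "t \<le> (\<Sum>k<n. vnorm (Suc n) (\<lambda>j. w k * b k j))"
      using t vnorm_sum[of "{..<n}" "Suc n" "\<lambda>k j. w k * b k j"] by simp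
    also have "\<dots> \<le> (\<Sum>k<n. vnorm (Suc n) (b k))"
    proof (intro sum_mono)
      fix k assume "k \<in> {..<n}"
      then have "cmod (w k) \<le> 1" using vnorm_component[of k n w] w(2) by simp
      then show "vnorm (Suc n) (\<lambda>j. w k * b k j) \<le> vnorm (Suc n) (b k)"
        unfolding vnorm_scale by (simp add: mult_left_le_one_le vnorm_nonneg)
    qed
    finally show ?thesis .
  qed
  then show ?thesis by (rule bdd_aboveI)
qed

lemma inv_norms_upper:
  assumes "uniquely_solvable n d h x" "w \<in> cspace n" "vnorm n w \<le> 1"
  shows "vnorm (Suc n) (rinv n d h x (diag_scale n d x w)) \<le> Sup (inv_norms n d h x)"
  using assms by (intro cSup_upper inv_norms_bdd) (auto simp: inv_norms_def)

lemma Sup_inv_norms_nonneg: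
  assumes "uniquely_solvable n d h x"
  shows "0 \<le> Sup (inv_norms n d h x)"
  using inv_norms_upper[OF assms, of "\<lambda>j. 0"] vnorm_nonneg[of "Suc n"]
  by (auto simp: cspace_def vnorm_zero_vec intro: order_trans)

lemma mu_nonneg: "uniquely_solvable n d h x \<Longrightarrow> 0 \<le> mu n d h x"
  unfolding mu_eq_Sup by (simp add: bw_norm_nonneg Sup_inv_norms_nonneg)

lemma mu_lower_bound:
  assumes US: "uniquely_solvable n d h x" and pos: "\<forall>i<n. 0 < deg_scale n d x i"
    and z: "z \<in> perp n x"
  shows "bw_norm n d h * vnorm (Suc n) z \<le> mu n d h x * vnorm n (ndiff n d h x z)"
proof -
  define u where "u = ndiff n d h x z"
  have u: "u \<in> cspace n" unfolding u_def ndiff_def by (rule diag_unscale_cspace)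
  have Du: "diag_scale n d x u = Dfapp n d h x z"
    unfolding u_def ndiff_def by (rule diag_scale_unscale[OF Dfapp_cspace pos])
  have "vnorm (Suc n) z \<le> Sup (inv_norms n d h x) * vnorm n u"
  proof (cases "vnorm n u = 0")
    case True
    then have "u = (\<lambda>j. 0)" by (rule vnorm_eq_0[OF u])
    then have "Dfapp n d h x z = (\<lambda>i. 0)" unfolding Du[symmetric] by (simp add: diag_scale_def fun_eq_iff)
    then have "z = rinv n d h x (\<lambda>i. 0)" by (rule rinv_unique[OF US z, symmetric])
    also have "\<dots> = (\<lambda>j. 0)" by (rule rinv_unique[OF US perp_zero Dfapp_zero])
    finally show ?thesis by (simp add: vnorm_zero_vec Sup_inv_norms_nonneg[OF US] vnorm_nonneg)
  next
    case False
    then have nu: "0 < vnorm n u" using vnorm_nonneg[of n u] by simp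
    define w where "w = (\<lambda>i. of_real (1 / vnorm n u) * u i)"
    have rinv_w: "rinv n d h x (diag_scale n d x w) = (\<lambda>j. of_real (1 / vnorm n u) * z j)"
      by (rule rinv_unique[OF US perp_scale[OF z]]) (simp only: w_def diag_scale_mult Dfapp_scale Du)
    have "w \<in> cspace n" using u by (simp add: w_def cspace_def)
    moreover have "vnorm n w \<le> 1" unfolding w_def vnorm_scale using nu by (simp add: norm_divide)
    ultimately have "vnorm (Suc n) (rinv n d h x (diag_scale n d x w)) \<le> Sup (inv_norms n d h x)"
      by (rule inv_norms_upper[OF US])
    then have "vnorm (Suc n) z / vnorm n u \<le> Sup (inv_norms n d h x)"
      unfolding rinv_w vnorm_scale using nu by (simp add: norm_divide)
    then show ?thesis using nu by (simp add: pos_divide_le_eq)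
  qed
  then show ?thesis
    unfolding mu_eq_Sup u_def using bw_norm_nonneg[of n d h]
    by (metis mult.assoc mult_left_mono)
qed

lemma mu_le_if_lower_bound:
  assumes US: "uniquely_solvable n d h x" and pos: "\<forall>i<n. 0 < deg_scale n d x i"
    and K: "0 \<le> K"
    and low: "\<And>z. z \<in> perp n x \<Longrightarrow> bw_norm n d h * vnorm (Suc n) z \<le> K * vnorm n (ndiff n d h x z)"
  shows "mu n d h x \<le> K"
proof (cases "bw_norm n d h = 0")
  case True
  then show ?thesis using K by (simp add: mu_eq_Sup)
next
  case False
  then have nh: "0 < bw_norm n d h" using bw_norm_nonneg[of n d h] by simp
  have "Sup (inv_norms n d h x) \<le> K / bw_norm n d h"
  proof (rule cSup_least)
    show "inv_norms n d h x \<noteq> {}"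
      unfolding inv_norms_def by (auto simp: cspace_def vnorm_zero_vec intro!: exI[of _ "\<lambda>j. 0"])
  next
    fix t assume "t \<in> inv_norms n d h x"
    then obtain w where t: "t = vnorm (Suc n) (rinv n d h x (diag_scale n d x w))"
      and w: "w \<in> cspace n" "vnorm n w \<le> 1"
      unfolding inv_norms_def by blast
    define z where "z = rinv n d h x (diag_scale n d x w)"
    have z: "z \<in> perp n x" "Dfapp n d h x z = diag_scale n d x w"
      unfolding z_def using rinv_solves[OF US diag_scale_cspace] by auto
    have "ndiff n d h x z = w"
      unfolding ndiff_def z(2) by (rule diag_unscale_scale[OF w(1) pos])
    then have "bw_norm n d h * t \<le> K * vnorm n w"
      using low[OF z(1)] unfolding t z_def[symmetric] by simp
    also have "\<dots> \<le> K" using w(2) K by (rule mult_left_le)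
    finally have "bw_norm n d h * t \<le> K" .
    then show "t \<le> K / bw_norm n d h" using nh by (simp add: field_simps)
  qed
  then show ?thesis unfolding mu_eq_Sup using nh by (simp add: field_simps)
qed

section \<open>Bounds for the normalized derivative and the Newton step\<close>

lemma scaled_row_le:
  assumes "1 \<le> d" "d \<le> D" "0 < r" "0 \<le> c"
  shows "real d * c * r ^ (d - 1) / (sqrt (real d) * r ^ (d - 1)) \<le> sqrt (real D) * c"
proof -
  have "real d = sqrt (real d) * sqrt (real d)" by simp
  then have "real d * c * r ^ (d - 1) / (sqrt (real d) * r ^ (d - 1)) = sqrt (real d) * c"
    using assms by (simp add: field_simps)
  also have "\<dots> \<le> sqrt (real D) * c" using assms by (intro mult_right_mono) auto
  finally show ?thesis .
qed

lemma ndiff_bound: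
  assumes dd: "\<forall>i<n. 1 \<le> d i \<and> d i \<le> D" and x: "0 < vnorm (Suc n) x"
  shows "vnorm n (ndiff n d h x z) \<le> sqrt (real D) * vnorm (Suc n) z * bw_norm n d h"
proof (rule vnorm_le_bw_norm)
  fix i assume i: "i < n"
  have "cmod (ndiff n d h x z i) = cmod (Dfapp n d h x z i) / deg_scale n d x i"
    using i deg_scale_pos[of d i n x] dd x by (simp add: ndiff_def diag_unscale_def norm_divide)
  also have "\<dots> \<le> real (d i) * (vnorm (Suc n) z * sqrt (eq_norm_sq n d h i)) * vnorm (Suc n) x ^ (d i - 1)
      / (sqrt (real (d i)) * vnorm (Suc n) x ^ (d i - 1))"
    unfolding deg_scale_def using deriv_bound[of d i n h x z] dd i x
    by (intro divide_right_mono) (auto simp: mult_ac)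
  also have "\<dots> \<le> sqrt (real D) * (vnorm (Suc n) z * sqrt (eq_norm_sq n d h i))"
    using dd i x by (intro scaled_row_le) (auto simp: vnorm_nonneg eq_norm_sq_nonneg)
  finally show "cmod (ndiff n d h x z i) \<le> sqrt (real D) * vnorm (Suc n) z * sqrt (eq_norm_sq n d h i)"
    by (simp add: mult_ac)
qed (simp add: vnorm_nonneg)

definition newton_rhs :: "nat \<Rightarrow> (nat \<Rightarrow> nat) \<Rightarrow> (nat \<Rightarrow> (nat \<Rightarrow> nat) \<Rightarrow> complex) \<Rightarrow> (nat \<Rightarrow> complex) \<Rightarrow> nat \<Rightarrow> complex" where
  "newton_rhs n d h x = (\<lambda>i. if i < n then of_nat (d i) * peval n d h i x else 0)"

lemma delta_eq: "delta n d h x = vnorm (Suc n) (rinv n d h x (newton_rhs n d h x)) / vnorm (Suc n) x"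
  unfolding delta_def newton_rhs_def ..

lemma newton_rhs_cspace: "newton_rhs n d h x \<in> cspace n"
  unfolding newton_rhs_def cspace_def by simp

lemma newton_rhs_sys_diff:
  "newton_rhs n d (sys_diff h1 h2) x = (\<lambda>i. newton_rhs n d h1 x i - newton_rhs n d h2 x i)"
  unfolding newton_rhs_def peval_sys_diff by (simp add: fun_eq_iff algebra_simps)

lemma newton_rhs_sys_scale: "newton_rhs n d (sys_scale c h) x = (\<lambda>i. c * newton_rhs n d h x i)"
  unfolding newton_rhs_def peval_sys_scale by (simp add: fun_eq_iff)

lemma newton_rhs_bound:
  assumes dd: "\<forall>i<n. 1 \<le> d i \<and> d i \<le> D" and x: "0 < vnorm (Suc n) x"
  shows "vnorm n (diag_unscale n d x (newton_rhs n d h x)) \<le> sqrt (real D) * vnorm (Suc n) x * bw_norm n d h"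
proof (rule vnorm_le_bw_norm)
  fix i assume i: "i < n"
  have pow: "vnorm (Suc n) x ^ d i = vnorm (Suc n) x * vnorm (Suc n) x ^ (d i - 1)"
    using dd i by (metis Suc_diff_le diff_Suc_1 power_Suc)
  have "cmod (diag_unscale n d x (newton_rhs n d h x) i) = real (d i) * cmod (peval n d h i x) / deg_scale n d x i"
    using i deg_scale_pos[of d i n x] dd x
    by (simp add: newton_rhs_def diag_unscale_def norm_divide norm_mult)
  also have "\<dots> \<le> real (d i) * (vnorm (Suc n) x * sqrt (eq_norm_sq n d h i)) * vnorm (Suc n) x ^ (d i - 1)
      / (sqrt (real (d i)) * vnorm (Suc n) x ^ (d i - 1))"
    unfolding deg_scale_def using eval_bound[of n d h i x] dd i x
    by (intro divide_right_mono) (auto simp: pow mult_ac)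
  also have "\<dots> \<le> sqrt (real D) * (vnorm (Suc n) x * sqrt (eq_norm_sq n d h i))"
    using dd i x by (intro scaled_row_le) (auto simp: vnorm_nonneg eq_norm_sq_nonneg)
  finally show "cmod (diag_unscale n d x (newton_rhs n d h x) i) \<le> sqrt (real D) * vnorm (Suc n) x * sqrt (eq_norm_sq n d h i)"
    by (simp add: mult_ac)
qed (simp add: vnorm_nonneg)

section \<open>Perturbation of mu and delta\<close>

definition unit_sys :: "nat \<Rightarrow> (nat \<Rightarrow> nat) \<Rightarrow> (nat \<Rightarrow> (nat \<Rightarrow> nat) \<Rightarrow> complex) \<Rightarrow> (nat \<Rightarrow> (nat \<Rightarrow> nat) \<Rightarrow> complex)" where
  "unit_sys n d h = sys_scale (of_real (1 / bw_norm n d h)) h"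

definition sys_dist :: "nat \<Rightarrow> (nat \<Rightarrow> nat) \<Rightarrow> (nat \<Rightarrow> (nat \<Rightarrow> nat) \<Rightarrow> complex) \<Rightarrow> (nat \<Rightarrow> (nat \<Rightarrow> nat) \<Rightarrow> complex) \<Rightarrow> real" where
  "sys_dist n d f g = bw_norm n d (sys_diff (unit_sys n d f) (unit_sys n d g))"

lemma ndiff_unit_sys:
  "0 < bw_norm n d h \<Longrightarrow> vnorm n (ndiff n d h x z) = bw_norm n d h * vnorm n (ndiff n d (unit_sys n d h) x z)"
  unfolding unit_sys_def ndiff_sys_scale vnorm_scale by (simp add: norm_divide)

lemma mu_lower_bound_unit:
  assumes "uniquely_solvable n d h x" "\<forall>i<n. 0 < deg_scale n d x i" "0 < bw_norm n d h"
    and "z \<in> perp n x"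
  shows "vnorm (Suc n) z \<le> mu n d h x * vnorm n (ndiff n d (unit_sys n d h) x z)"
  using mu_lower_bound[OF assms(1,2,4)] assms(3) unfolding ndiff_unit_sys[OF assms(3)]
  by (simp add: mult.left_commute)

lemma mu_le_if_lower_bound_unit:
  assumes "uniquely_solvable n d h x" "\<forall>i<n. 0 < deg_scale n d x i" "0 < bw_norm n d h" "0 \<le> K"
    and "\<And>z. z \<in> perp n x \<Longrightarrow> vnorm (Suc n) z \<le> K * vnorm n (ndiff n d (unit_sys n d h) x z)"
  shows "mu n d h x \<le> K"
  using assms by (intro mu_le_if_lower_bound) (auto simp: ndiff_unit_sys mult.left_commute)

lemma ndiff_unit_sys_close:
  assumes dd: "\<forall>i<n. 1 \<le> d i \<and> d i \<le> D" and x: "0 < vnorm (Suc n) x"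
  shows "\<bar>vnorm n (ndiff n d (unit_sys n d f) x z) - vnorm n (ndiff n d (unit_sys n d g) x z)\<bar>
     \<le> sqrt (real D) * sys_dist n d f g * vnorm (Suc n) z"
proof -
  have "\<bar>vnorm n (ndiff n d (unit_sys n d f) x z) - vnorm n (ndiff n d (unit_sys n d g) x z)\<bar>
      \<le> vnorm n (ndiff n d (sys_diff (unit_sys n d f) (unit_sys n d g)) x z)"
    unfolding ndiff_sys_diff by (rule vnorm_diff_abs)
  also have "\<dots> \<le> sqrt (real D) * vnorm (Suc n) z * sys_dist n d f g"
    unfolding sys_dist_def by (rule ndiff_bound[OF dd x])
  finally show ?thesis by (simp add: mult_ac)
qed

lemma perturbed_lower_bound:
  assumes dd: "\<forall>i<n. 1 \<le> d i \<and> d i \<le> D" and x: "0 < vnorm (Suc n) x"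
    and nf: "0 < bw_norm n d f" and USf: "uniquely_solvable n d f x" and z: "z \<in> perp n x"
  shows "(1 - sqrt (real D) * mu n d f x * sys_dist n d f g) * vnorm (Suc n) z
     \<le> mu n d f x * vnorm n (ndiff n d (unit_sys n d g) x z)"
proof -
  let ?Af = "vnorm n (ndiff n d (unit_sys n d f) x z)"
  let ?Ag = "vnorm n (ndiff n d (unit_sys n d g) x z)"
  have pos: "\<forall>i<n. 0 < deg_scale n d x i" using dd x deg_scale_pos by blast
  have "?Af \<le> ?Ag + sqrt (real D) * sys_dist n d f g * vnorm (Suc n) z"
    using ndiff_unit_sys_close[OF dd x, of f z g] by linarith
  then have "mu n d f x * ?Af \<le> mu n d f x * (?Ag + sqrt (real D) * sys_dist n d f g * vnorm (Suc n) z)"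
    by (rule mult_left_mono[OF _ mu_nonneg[OF USf]])
  with mu_lower_bound_unit[OF USf pos nf z]
  have "vnorm (Suc n) z \<le> mu n d f x * (?Ag + sqrt (real D) * sys_dist n d f g * vnorm (Suc n) z)"
    by linarith
  then show ?thesis by (simp add: algebra_simps)
qed

lemma mu_perturbation:
  assumes dd: "\<forall>i<n. 1 \<le> d i \<and> d i \<le> D" and x: "0 < vnorm (Suc n) x"
    and nf: "0 < bw_norm n d f" and ng: "0 < bw_norm n d g"
    and USf: "uniquely_solvable n d f x"
  defines "v \<equiv> sqrt (real D) * mu n d f x * sys_dist n d f g"
  assumes v1: "v < 1"
  shows "uniquely_solvable n d g x" and "(1 - v) * mu n d g x \<le> mu n d f x"
    and "mu n d f x \<le> (1 + v) * mu n d g x"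
proof -
  have pos: "\<forall>i<n. 0 < deg_scale n d x i" using dd x deg_scale_pos by blast
  let ?Af = "\<lambda>z. vnorm n (ndiff n d (unit_sys n d f) x z)"
  let ?Ag = "\<lambda>z. vnorm n (ndiff n d (unit_sys n d g) x z)"
  note lowg = perturbed_lower_bound[OF dd x nf USf, of _ g, folded v_def]
  have muf0: "0 \<le> mu n d f x" by (rule mu_nonneg[OF USf])
  show USg: "uniquely_solvable n d g x"
  proof (rule uniquely_solvable_if_inj)
    fix z assume z: "z \<in> perp n x" and g0: "Dfapp n d g x z = (\<lambda>i. 0)"
    have "ndiff n d g x z = (\<lambda>i. 0)"
      unfolding ndiff_def g0 by (simp add: diag_unscale_def fun_eq_iff)
    then have "?Ag z = 0"
      unfolding unit_sys_def ndiff_sys_scale by (simp add: vnorm_zero_vec)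
    then have "vnorm (Suc n) z = 0"
      using lowg[OF z] v1 vnorm_nonneg[of "Suc n" z] by (simp add: mult_le_0_iff)
    then show "z = (\<lambda>j. 0)" using z vnorm_eq_0 unfolding perp_def by blast
  qed
  have "mu n d g x \<le> mu n d f x / (1 - v)"
  proof (rule mu_le_if_lower_bound_unit[OF USg pos ng])
    show "0 \<le> mu n d f x / (1 - v)" using muf0 v1 by simp
    show "vnorm (Suc n) z \<le> mu n d f x / (1 - v) * ?Ag z" if "z \<in> perp n x" for z
      using lowg[OF that] v1 by (simp add: field_simps)
  qed
  then show "(1 - v) * mu n d g x \<le> mu n d f x" using v1 by (simp add: field_simps)
  show "mu n d f x \<le> (1 + v) * mu n d g x"
  proof (rule mu_le_if_lower_bound_unit[OF USf pos nf])
    define eps where "eps = sqrt (real D) * sys_dist n d f g"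
    have eps0: "0 \<le> eps" unfolding eps_def sys_dist_def by (simp add: bw_norm_nonneg)
    have mug0: "0 \<le> mu n d g x" by (rule mu_nonneg[OF USg])
    have "v = mu n d f x * eps" unfolding v_def eps_def by simp
    then have "0 \<le> v" using muf0 eps0 by simp
    with mug0 show "0 \<le> (1 + v) * mu n d g x" by simp
    fix z assume z: "z \<in> perp n x"
    have "vnorm (Suc n) z \<le> mu n d g x * ?Ag z"
      by (rule mu_lower_bound_unit[OF USg pos ng z])
    also have "\<dots> \<le> mu n d g x * (?Af z + eps * vnorm (Suc n) z)"
      using ndiff_unit_sys_close[OF dd x, of f z g] mug0 unfolding eps_def
      by (intro mult_left_mono) auto
    also have "\<dots> \<le> mu n d g x * (?Af z + eps * (mu n d f x * ?Af z))"
      using mu_lower_bound_unit[OF USf pos nf z] mug0 eps0 by (intro mult_left_mono add_left_mono) auto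
    finally show "vnorm (Suc n) z \<le> (1 + v) * mu n d g x * ?Af z"
      unfolding v_def eps_def by (simp add: algebra_simps)
  qed
qed

text \<open>The difference of the Newton steps zf = (Df(x)|_{x^perp})^{-1} (d_i f_i(x)) and
  zg has norm at most v ||x|| + v ||zg||: its normalized image under f' is the difference of
  the scaled right-hand sides of f' and g', corrected by the derivative of f' - g'.\<close>
lemma newton_step_difference:
  assumes dd: "\<forall>i<n. 1 \<le> d i \<and> d i \<le> D" and x: "0 < vnorm (Suc n) x"
    and nf: "0 < bw_norm n d f" and USf: "uniquely_solvable n d f x" and USg: "uniquely_solvable n d g x"
  defines "zf \<equiv> rinv n d f x (newton_rhs n d f x)" and "zg \<equiv> rinv n d g x (newton_rhs n d g x)"
    and "v \<equiv> sqrt (real D) * mu n d f x * sys_dist n d f g"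
  shows "vnorm (Suc n) (\<lambda>j. zf j - zg j) \<le> v * vnorm (Suc n) x + v * vnorm (Suc n) zg"
proof -
  have pos: "\<forall>i<n. 0 < deg_scale n d x i" using dd x deg_scale_pos by blast
  define fh where "fh = unit_sys n d f"
  define gh where "gh = unit_sys n d g"
  define e where "e = sys_diff fh gh"
  let ?U = "diag_unscale n d x"
  have zf: "zf \<in> perp n x" "Dfapp n d f x zf = newton_rhs n d f x"
    unfolding zf_def using rinv_solves[OF USf newton_rhs_cspace] by auto
  have zg: "zg \<in> perp n x" "Dfapp n d g x zg = newton_rhs n d g x"
    unfolding zg_def using rinv_solves[OF USg newton_rhs_cspace] by auto
  have "Dfapp n d fh x zf = newton_rhs n d fh x"
    unfolding fh_def unit_sys_def Dfapp_sys_scale newton_rhs_sys_scale zf(2) ..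
  then have nf_eq: "ndiff n d fh x zf = ?U (newton_rhs n d fh x)"
    unfolding ndiff_def by simp
  have "Dfapp n d gh x zg = newton_rhs n d gh x"
    unfolding gh_def unit_sys_def Dfapp_sys_scale newton_rhs_sys_scale zg(2) ..
  then have ng_eq: "ndiff n d gh x zg = ?U (newton_rhs n d gh x)"
    unfolding ndiff_def by simp
  have e_zg: "ndiff n d e x zg = (\<lambda>i. ndiff n d fh x zg i - ?U (newton_rhs n d gh x) i)"
    unfolding e_def ndiff_sys_diff ng_eq ..
  have e_rhs: "?U (newton_rhs n d e x) = (\<lambda>i. ?U (newton_rhs n d fh x) i - ?U (newton_rhs n d gh x) i)"
    unfolding e_def newton_rhs_sys_diff diag_unscale_diff ..
  have "ndiff n d fh x (\<lambda>j. zf j - zg j) = (\<lambda>i. ?U (newton_rhs n d e x) i - ndiff n d e x zg i)"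
    unfolding ndiff_diff nf_eq e_zg e_rhs by (simp add: fun_eq_iff)
  then have "vnorm n (ndiff n d fh x (\<lambda>j. zf j - zg j)) \<le> vnorm n (?U (newton_rhs n d e x)) + vnorm n (ndiff n d e x zg)"
    by (simp add: vnorm_diff)
  also have "\<dots> \<le> sqrt (real D) * vnorm (Suc n) x * sys_dist n d f g + sqrt (real D) * vnorm (Suc n) zg * sys_dist n d f g"
    unfolding sys_dist_def e_def fh_def gh_def
    by (intro add_mono newton_rhs_bound[OF dd x] ndiff_bound[OF dd x])
  finally have "mu n d f x * vnorm n (ndiff n d fh x (\<lambda>j. zf j - zg j))
      \<le> mu n d f x * (sqrt (real D) * vnorm (Suc n) x * sys_dist n d f g + sqrt (real D) * vnorm (Suc n) zg * sys_dist n d f g)"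
    by (rule mult_left_mono) (rule mu_nonneg[OF USf])
  moreover have "vnorm (Suc n) (\<lambda>j. zf j - zg j) \<le> mu n d f x * vnorm n (ndiff n d fh x (\<lambda>j. zf j - zg j))"
    unfolding fh_def by (rule mu_lower_bound_unit[OF USf pos nf perp_diff[OF zf(1) zg(1)]])
  ultimately show ?thesis unfolding v_def by (simp add: algebra_simps)
qed

lemma delta_perturbation:
  assumes dd: "\<forall>i<n. 1 \<le> d i \<and> d i \<le> D" and x: "0 < vnorm (Suc n) x"
    and nf: "0 < bw_norm n d f" and USf: "uniquely_solvable n d f x" and USg: "uniquely_solvable n d g x"
  defines "v \<equiv> sqrt (real D) * mu n d f x * sys_dist n d f g"
  shows "(1 - v) * delta n d g x - v \<le> delta n d f x" and "delta n d f x \<le> (1 + v) * delta n d g x + v"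
proof -
  define r where "r = vnorm (Suc n) x"
  define zf where "zf = rinv n d f x (newton_rhs n d f x)"
  define zg where "zg = rinv n d g x (newton_rhs n d g x)"
  define zd where "zd = (\<lambda>j. zf j - zg j)"
  have zd: "vnorm (Suc n) zd \<le> v * r + v * vnorm (Suc n) zg"
    unfolding zd_def zf_def zg_def r_def v_def by (rule newton_step_difference[OF dd x nf USf USg])
  have "vnorm (Suc n) zf \<le> vnorm (Suc n) zg + vnorm (Suc n) zd"
    using vnorm_add[of "Suc n" zg zd] by (simp add: zd_def)
  with zd have up: "vnorm (Suc n) zf \<le> (1 + v) * vnorm (Suc n) zg + v * r"
    by (simp add: algebra_simps)
  have "vnorm (Suc n) zg \<le> vnorm (Suc n) zf + vnorm (Suc n) zd"
    using vnorm_diff[of "Suc n" zf zd] by (simp add: zd_def)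
  with zd have low: "(1 - v) * vnorm (Suc n) zg - v * r \<le> vnorm (Suc n) zf"
    by (simp add: algebra_simps)
  have r: "0 < r" unfolding r_def by (rule x)
  have delta_f: "delta n d f x = vnorm (Suc n) zf / r" and delta_g: "delta n d g x = vnorm (Suc n) zg / r"
    unfolding delta_eq zf_def zg_def r_def by simp_all
  show "(1 - v) * delta n d g x - v \<le> delta n d f x"
    using divide_right_mono[OF low, of r] r unfolding delta_f delta_g by (simp add: diff_divide_distrib)
  show "delta n d f x \<le> (1 + v) * delta n d g x + v"
    using divide_right_mono[OF up, of r] r unfolding delta_f delta_g by (simp add: add_divide_distrib)
qed

text \<open>Full rank forces positive degrees: a constant equation has zero derivative.\<close>
lemma rank_full_degree_pos:
  assumes rk: "rank_full n d f x" and i: "i < n"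
  shows "1 \<le> d i"
proof (rule ccontr)
  assume "\<not> 1 \<le> d i"
  then have "d i = 0" by simp
  then have "Dfapp n d f x z i = 0" for z
    unfolding Dfapp_def ppartial_def using i by (simp add: mons_0)
  moreover have "(\<lambda>k. if k = i then (1::complex) else 0) \<in> cspace n"
    using i unfolding cspace_def by simp
  then obtain z where "Dfapp n d f x z = (\<lambda>k. if k = i then (1::complex) else 0)"
    using rk unfolding rank_full_def by (metis imageE)
  ultimately show False by (metis one_neq_zero)
qed

lemma dR_nonneg: "0 \<le> dR n x y"
proof -
  define q where "q = cmod (hinner (Suc n) x y) / (vnorm (Suc n) x * vnorm (Suc n) y)"
  have "q \<le> 1"
    unfolding q_def using hinner_cauchy_schwarz[of "Suc n" x y]
    by (cases "vnorm (Suc n) x * vnorm (Suc n) y = 0")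
      (simp_all add: divide_le_eq_1 vnorm_nonneg less_le)
  moreover have "0 \<le> q" unfolding q_def by (simp add: vnorm_nonneg)
  ultimately show ?thesis unfolding dR_def q_def[symmetric] by (intro arccos_lbound) auto
qed

theorem lemma11:
  fixes n :: nat and d :: "nat \<Rightarrow> nat"
    and f g :: "nat \<Rightarrow> (nat \<Rightarrow> nat) \<Rightarrow> complex"
    and x y :: "nat \<Rightarrow> complex"
  assumes n: "n \<ge> 1"
    and D2: "Dmax n d \<ge> 2"
    and Hf: "in_Hd n d f" and Hg: "in_Hd n d g"
    and fnz: "f \<noteq> (\<lambda>i \<alpha>. 0)" and gnz: "g \<noteq> (\<lambda>i \<alpha>. 0)"
    and xC: "x \<in> cspace (Suc n)" and yC: "y \<in> cspace (Suc n)"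
    and xnz: "x \<noteq> (\<lambda>j. 0)" and ynz: "y \<noteq> (\<lambda>j. 0)"
    and rk: "rank_full n d f x"
    and v1: "sqrt (real (Dmax n d)) * mu n d f x *
        bw_norm n d (sys_diff (sys_scale (of_real (1 / bw_norm n d f)) f)
                              (sys_scale (of_real (1 / bw_norm n d g)) g)) < 1"
  shows "let D = real (Dmax n d);
             v = sqrt D * mu n d f x *
               bw_norm n d (sys_diff (sys_scale (of_real (1 / bw_norm n d f)) f)
                                     (sys_scale (of_real (1 / bw_norm n d g)) g));
             u = D powr (3/2) / 2 * mu n d f x * dR n x y;
             ug = D powr (3/2) / 2 * mu n d g x * dR n x y
         in (1 - v) * ug \<le> u \<and> u \<le> (1 + v) * ug \<and>
            (1 - v) * delta n d g x - v \<le> delta n d f x \<and>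
            delta n d f x \<le> (1 + v) * delta n d g x + v"
proof -
  define D where "D = Dmax n d"
  have dd: "\<forall>i<n. 1 \<le> d i \<and> d i \<le> D"
    unfolding D_def Dmax_def using rank_full_degree_pos[OF rk] by (auto intro: Max_ge)
  have x: "0 < vnorm (Suc n) x" by (rule vnorm_pos[OF xC xnz])
  have nf: "0 < bw_norm n d f" by (rule bw_norm_pos[OF Hf fnz])
  have ng: "0 < bw_norm n d g" by (rule bw_norm_pos[OF Hg gnz])
  have USf: "uniquely_solvable n d f x" by (rule uniquely_solvable_if_rank_full[OF rk xC xnz])
  define v where "v = sqrt (real D) * mu n d f x * sys_dist n d f g"
  have v1': "v < 1" using v1 unfolding v_def D_def sys_dist_def unit_sys_def .
  note mu = mu_perturbation[OF dd x nf ng USf v1'[unfolded v_def]]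
  note delta = delta_perturbation[OF dd x nf USf mu(1)]
  define c where "c = real D powr (3/2) / 2 * dR n x y"
  have c: "0 \<le> c" unfolding c_def by (simp add: dR_nonneg)
  have "(1 - v) * (c * mu n d g x) \<le> c * mu n d f x" "c * mu n d f x \<le> (1 + v) * (c * mu n d g x)"
    using mult_left_mono[OF mu(2) c] mult_left_mono[OF mu(3) c] unfolding v_def by (simp_all add: mult_ac)
  then show ?thesis
    using delta unfolding Let_def v_def c_def D_def sys_dist_def unit_sys_def by (simp add: mult_ac)
qed

end
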